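(* Let $J\ge2$ and let $X$ come from the $J$-state HMM of the context with $\mu$ Lebesgue measure and parameters satisfying Assumptions A2', A3 and A4. Then there exist functions $(h_l)_{l\in\mathbb N}$, not depending on $H$, with $\sup_l\|h_l\|_\infty<\infty$, such that the matrix $O^{L_0}=(E[h_l(X_1)\mid\theta_1=j])_{l\le L_0,j\le J}\in\mathbb R^{L_0\times J}$ satisfies $$\sigma_J(O^{L_0})\ge C\quad\text{for all }L_0\ge\underline L,$$ for some $C>0$ and $\underline L\in\mathbb N$ depending on $f_1,\dots,f_J$.
   Context: $J$-state HMM: $\theta=(\theta_n)$ is a Markov chain on $\{1,\dots,J\}$ with transition matrix $Q$ and initial distribution $\pi$; given $\theta$, the $X_n$ are independent with Lebesgue densities $f_{\theta_n}$. $\sigma_J(A)$ denotes the $J$-th largest singular value of a matrix $A$. Assumption A2': $Q$ has full rank, the chain is irreducible and aperiodic, and $\theta_1$ follows the invariant distribution. Assumption A3: $f_1,\dots,f_J$ are linearly independent. Assumption A4: $f_1,\dots,f_J\in C^s(\mathbb R)$ for some $s>0$ (usual locally Hölder space: bounded continuous with $\sup_{0<|x-y|\le1}|f(x)-f(y)|/|x-y|^s<\infty$ for $s<1$, and $f^{(\lfloor s\rfloor)}\in C^{s-\lfloor s\rfloor}$ for $s\ge1$). *)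

theory Defs
  imports "HOL-Analysis.Analysis" "Jordan_Normal_Form.Char_Poly"
    "HOL-Computational_Algebra.Polynomial" "HOL-Library.Multiset"
begin

text \<open>The singular values of a real matrix A (with n columns) are the square roots of
  the n eigenvalues (counted with algebraic multiplicity) of the symmetric positive
  semidefinite matrix A^T A, i.e. of the roots of its characteristic polynomial.
  sigma_k A is the k-th largest one (k = 1,...,n).\<close>

definition singular_values_desc :: "real mat \<Rightarrow> real list" where
  "singular_values_desc A =
     map sqrt (rev (sorted_list_of_multiset (proots (char_poly (transpose_mat A * A)))))"

definition sigma_sv :: "nat \<Rightarrow> real mat \<Rightarrow> real" where
  "sigma_sv k A = singular_values_desc A ! (k - 1)"

definition holder_seminorm_finite :: "real \<Rightarrow> (real \<Rightarrow> real) \<Rightarrow> bool" where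
  "holder_seminorm_finite a g \<longleftrightarrow>
     (\<exists>M. \<forall>x y. 0 < \<bar>x - y\<bar> \<and> \<bar>x - y\<bar> \<le> 1 \<longrightarrow> \<bar>g x - g y\<bar> / \<bar>x - y\<bar> powr a \<le> M)"

definition bounded_cont :: "(real \<Rightarrow> real) \<Rightarrow> bool" where
  "bounded_cont g \<longleftrightarrow> continuous_on UNIV g \<and> (\<exists>M. \<forall>x. \<bar>g x\<bar> \<le> M)"

definition holder_space :: "real \<Rightarrow> (real \<Rightarrow> real) \<Rightarrow> bool" where
  "holder_space s f \<longleftrightarrow>
     (\<forall>k \<le> nat \<lfloor>s\<rfloor>. bounded_cont ((deriv ^^ k) f)) \<and>
     (\<forall>k < nat \<lfloor>s\<rfloor>. \<forall>x. (deriv ^^ k) f differentiable at x) \<and>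
     holder_seminorm_finite (s - of_int \<lfloor>s\<rfloor>) ((deriv ^^ nat \<lfloor>s\<rfloor>) f)"

text \<open>States are indexed 0..<J. Q is a J x J transition matrix, p a distribution.\<close>

definition stochastic_matrix :: "nat \<Rightarrow> real mat \<Rightarrow> bool" where
  "stochastic_matrix J Q \<longleftrightarrow> Q \<in> carrier_mat J J \<and>
     (\<forall>i<J. \<forall>j<J. Q $$ (i,j) \<ge> 0) \<and> (\<forall>i<J. (\<Sum>j<J. Q $$ (i,j)) = 1)"

definition prob_vector :: "nat \<Rightarrow> (nat \<Rightarrow> real) \<Rightarrow> bool" where
  "prob_vector J p \<longleftrightarrow> (\<forall>j<J. p j \<ge> 0) \<and> (\<Sum>j<J. p j) = 1"

definition irreducible_chain :: "nat \<Rightarrow> real mat \<Rightarrow> bool" where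
  "irreducible_chain J Q \<longleftrightarrow> (\<forall>i<J. \<forall>j<J. \<exists>n>0. (Q ^\<^sub>m n) $$ (i,j) > 0)"

definition aperiodic_chain :: "nat \<Rightarrow> real mat \<Rightarrow> bool" where
  "aperiodic_chain J Q \<longleftrightarrow> (\<forall>i<J. Gcd {n::nat. n > 0 \<and> (Q ^\<^sub>m n) $$ (i,i) > 0} = 1)"

definition invariant_distribution :: "nat \<Rightarrow> real mat \<Rightarrow> (nat \<Rightarrow> real) \<Rightarrow> bool" where
  "invariant_distribution J Q p \<longleftrightarrow> prob_vector J p \<and>
     (\<forall>j<J. (\<Sum>i<J. p i * Q $$ (i,j)) = p j)"

definition assumption_A2' :: "nat \<Rightarrow> real mat \<Rightarrow> (nat \<Rightarrow> real) \<Rightarrow> bool" where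
  "assumption_A2' J Q p \<longleftrightarrow> stochastic_matrix J Q \<and> Determinant.det Q \<noteq> 0 \<and>
     irreducible_chain J Q \<and> aperiodic_chain J Q \<and> invariant_distribution J Q p"

definition lebesgue_densities :: "nat \<Rightarrow> (nat \<Rightarrow> real \<Rightarrow> real) \<Rightarrow> bool" where
  "lebesgue_densities J f \<longleftrightarrow> (\<forall>j<J. f j \<in> borel_measurable lborel \<and> (\<forall>x. f j x \<ge> 0) \<and>
     integrable lborel (f j) \<and> (\<integral>x. f j x \<partial>lborel) = 1)"

definition assumption_A3 :: "nat \<Rightarrow> (nat \<Rightarrow> real \<Rightarrow> real) \<Rightarrow> bool" where
  "assumption_A3 J f \<longleftrightarrow>
     (\<forall>c::nat \<Rightarrow> real. (\<forall>x. (\<Sum>j<J. c j * f j x) = 0) \<longrightarrow> (\<forall>j<J. c j = 0))"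

definition assumption_A4 :: "nat \<Rightarrow> (nat \<Rightarrow> real \<Rightarrow> real) \<Rightarrow> bool" where
  "assumption_A4 J f \<longleftrightarrow> (\<exists>s>0. \<forall>j<J. holder_space s (f j))"

text \<open>E[h(X_1) | theta_1 = j]: X_1 given theta_1 = j has Lebesgue density f_j.\<close>
definition cond_exp_emission :: "(nat \<Rightarrow> real \<Rightarrow> real) \<Rightarrow> (real \<Rightarrow> real) \<Rightarrow> nat \<Rightarrow> real" where
  "cond_exp_emission f h j = (\<integral>x. h x * f j x \<partial>lborel)"

text \<open>O^{L0} = (E[h_l(X_1) | theta_1 = j])_{l <= L0, j <= J}, rows l = 1..L0 stored at 0..<L0.\<close>
definition O_mat :: "(nat \<Rightarrow> real \<Rightarrow> real) \<Rightarrow> (nat \<Rightarrow> real \<Rightarrow> real) \<Rightarrow> nat \<Rightarrow> nat \<Rightarrow> real mat" where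
  "O_mat f h J L0 = mat L0 J (\<lambda>(l,j). cond_exp_emission f (h (l+1)) j)"

end

theory Submission
  imports Defs
begin

text \<open>Take for h the indicators of an enumeration of the closed intervals with rational
  endpoints. A continuous function whose integrals over all these intervals vanish is zero, so
  by A3, and the continuity contained in A4, the columns of the infinite matrix of interval
  integrals of f_1, ..., f_J are linearly independent, and some J of its rows form a nonsingular
  matrix S. As soon as L0 exceeds the indices of these rows, |v|^2 <= |S^-1|_F^2 |S v|^2
  <= J |S^-1|_F^2 |O v|^2 for every v, which bounds the smallest eigenvalue of O^T O, the
  square of the J-th singular value, from below uniformly in L0.\<close>

lemma exists_nonsingular_row_selection:
  fixes H :: "nat \<Rightarrow> nat \<Rightarrow> 'a :: comm_ring_1"
  assumes "\<And>c. \<forall>l. (\<Sum>j<n. c j * H l j) = 0 \<Longrightarrow> \<forall>j<n. c j = 0"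
  shows "\<exists>ls. det (mat n n (\<lambda>(i,j). H (ls i) j)) \<noteq> 0"
  using assms
proof (induction n)
  case 0
  then show ?case by (auto simp: det_def)
next
  case (Suc n)
  have "\<forall>j<n. c j = 0" if "\<forall>l. (\<Sum>j<n. c j * H l j) = 0" for c
  proof -
    have "\<forall>l. (\<Sum>j<Suc n. (c(n:=0)) j * H l j) = 0" using that by simp
    then have "\<forall>j<Suc n. (c(n:=0)) j = 0" using Suc.prems by blast
    then show ?thesis by (metis fun_upd_other less_SucI less_irrefl)
  qed
  then obtain ls where ls: "det (mat n n (\<lambda>(i,j). H (ls i) j)) \<noteq> 0" using Suc.IH by blast
  \<comment> \<open>Expanding along the last row, whose choice l is still free, gives a linear form in
    H l with cofactors independent of l; its last coefficient is the minor selected above.\<close>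
  define M where "M l = mat (Suc n) (Suc n) (\<lambda>(i,j). H ((ls(n:=l)) i) j)" for l
  define c where "c j = cofactor (M 0) n j" for j
  have cofactor_M: "cofactor (M l) n j = c j" for l j
    unfolding c_def cofactor_def mat_delete_def M_def
    by (intro arg_cong[where f="\<lambda>x. _ * det x"] eq_matI) auto
  have "mat_delete (M 0) n n = mat n n (\<lambda>(i,j). H (ls i) j)"
    unfolding mat_delete_def M_def by (intro eq_matI) auto
  then have "c n \<noteq> 0" using ls unfolding c_def cofactor_def by simp
  then obtain l where l: "(\<Sum>j<Suc n. c j * H l j) \<noteq> 0" using Suc.prems[of c] by blast
  have "det (M l) = (\<Sum>j<Suc n. M l $$ (n,j) * cofactor (M l) n j)"
    by (rule laplace_expansion_row) (auto simp: M_def)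
  also have "\<dots> = (\<Sum>j<Suc n. c j * H l j)"
    by (intro sum.cong refl) (simp add: cofactor_M, simp add: M_def mult.commute)
  finally show ?case using l unfolding M_def by metis
qed

lemma exists_left_inverse_if_det_nonzero:
  fixes S :: "'a :: field mat"
  assumes "S \<in> carrier_mat n n" and "det S \<noteq> 0"
  shows "\<exists>T \<in> carrier_mat n n. T * S = 1\<^sub>m n"
  using det_non_zero_imp_unit[OF assms, of undefined] unfolding Units_def ring_mat_def by auto

lemma sum_sq_entries_pos_if_left_inverse:
  fixes S T :: "'a :: linordered_idom mat"
  assumes T: "T \<in> carrier_mat n n" and S: "S \<in> carrier_mat n n"
    and TS: "T * S = 1\<^sub>m n" and n: "0 < n"
  shows "0 < (\<Sum>j<n. \<Sum>i<n. (T $$ (j,i))\<^sup>2)"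
proof (rule ccontr)
  assume "\<not> ?thesis"
  then have "(\<Sum>j<n. \<Sum>i<n. (T $$ (j,i))\<^sup>2) = 0"
    by (simp add: order.antisym sum_nonneg)
  then have "T $$ (j,i) = 0" if "j < n" "i < n" for j i
    using that by (simp add: sum_nonneg_eq_0_iff sum_nonneg)
  then have "T = 0\<^sub>m n n" using T by (intro eq_matI) auto
  then have "(T * S) $$ (0,0) = 0" using S n by simp
  then show False using TS n by simp
qed

lemma gram_eigenvector_rayleigh:
  fixes A :: "real mat"
  assumes A: "A \<in> carrier_mat L J"
    and ev: "eigenvector (map_mat complex_of_real (transpose_mat A * A)) v z"
  shows "z * of_real (\<Sum>j<J. (cmod (vec_index v j))\<^sup>2)
    = of_real (\<Sum>k<L. (cmod (\<Sum>m<J. of_real (A $$ (k,m)) * vec_index v m))\<^sup>2)"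
proof -
  define w where "w k = (\<Sum>m<J. complex_of_real (A $$ (k,m)) * vec_index v m)" for k
  have v: "v \<in> carrier_vec J"
    and Mv: "map_mat complex_of_real (transpose_mat A * A) *\<^sub>v v = z \<cdot>\<^sub>v v"
    using ev A unfolding eigenvector_def by auto
  have zv: "z * vec_index v j = (\<Sum>k<L. of_real (A $$ (k,j)) * w k)" if j: "j < J" for j
  proof -
    have "z * vec_index v j = vec_index (map_mat complex_of_real (transpose_mat A * A) *\<^sub>v v) j"
      using Mv v j by simp
    also have "\<dots> = (\<Sum>m<J. of_real (\<Sum>k<L. A $$ (k,j) * A $$ (k,m)) * vec_index v m)"
      using A v j by (auto simp: scalar_prod_def lessThan_atLeast0 intro!: sum.cong)
    also have "\<dots> = (\<Sum>m<J. \<Sum>k<L. of_real (A $$ (k,j)) * (of_real (A $$ (k,m)) * vec_index v m))"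
      by (simp add: sum_distrib_right mult.assoc)
    also have "\<dots> = (\<Sum>k<L. of_real (A $$ (k,j)) * w k)"
      by (subst sum.swap) (simp add: w_def sum_distrib_left)
    finally show ?thesis .
  qed
  have "z * of_real (\<Sum>j<J. (cmod (vec_index v j))\<^sup>2)
      = (\<Sum>j<J. cnj (vec_index v j) * (z * vec_index v j))"
    by (simp add: sum_distrib_left complex_norm_square mult_ac del: of_real_power)
  also have "\<dots> = (\<Sum>j<J. \<Sum>k<L. cnj (vec_index v j) * of_real (A $$ (k,j)) * w k)"
    by (intro sum.cong refl) (simp add: zv sum_distrib_left mult.assoc)
  also have "\<dots> = (\<Sum>k<L. w k * cnj (w k))"
    by (subst sum.swap) (simp add: w_def sum_distrib_left sum_distrib_right mult_ac)
  also have "\<dots> = of_real (\<Sum>k<L. (cmod (w k))\<^sup>2)"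
    by (simp add: complex_norm_square del: of_real_power)
  finally show ?thesis unfolding w_def .
qed

lemma sum_cmod_sq_le_left_inverse:
  fixes S T :: "real mat" and v :: "nat \<Rightarrow> complex"
  assumes T: "T \<in> carrier_mat J J" and S: "S \<in> carrier_mat J J" and TS: "T * S = 1\<^sub>m J"
  shows "(\<Sum>j<J. (cmod (v j))\<^sup>2)
    \<le> (\<Sum>j<J. \<Sum>i<J. (T $$ (j,i))\<^sup>2) * (\<Sum>i<J. (cmod (\<Sum>m<J. of_real (S $$ (i,m)) * v m))\<^sup>2)"
proof -
  define w where "w i = (\<Sum>m<J. complex_of_real (S $$ (i,m)) * v m)" for i
  have v_eq: "v j = (\<Sum>i<J. of_real (T $$ (j,i)) * w i)" if j: "j < J" for j
  proof -
    have TS_entry: "(\<Sum>i<J. T $$ (j,i) * S $$ (i,m)) = (if j = m then 1 else 0)" if m: "m < J" for m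
    proof -
      have "(T * S) $$ (j,m) = (\<Sum>i<J. T $$ (j,i) * S $$ (i,m))"
        using T S j m by (auto simp: scalar_prod_def lessThan_atLeast0 intro!: sum.cong)
      then show ?thesis using TS j m by simp
    qed
    have "(\<Sum>i<J. of_real (T $$ (j,i)) * w i)
        = (\<Sum>i<J. \<Sum>m<J. of_real (T $$ (j,i)) * (of_real (S $$ (i,m)) * v m))"
      by (simp add: w_def sum_distrib_left)
    also have "\<dots> = (\<Sum>m<J. \<Sum>i<J. of_real (T $$ (j,i)) * of_real (S $$ (i,m)) * v m)"
      by (subst sum.swap) (simp add: mult.assoc)
    also have "\<dots> = (\<Sum>m<J. of_real (\<Sum>i<J. T $$ (j,i) * S $$ (i,m)) * v m)"
      by (simp add: sum_distrib_right)
    also have "\<dots> = (\<Sum>m<J. if j = m then v m else 0)"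
      by (intro sum.cong refl) (simp add: TS_entry)
    finally show ?thesis using j by simp
  qed
  have v_bound: "(cmod (v j))\<^sup>2 \<le> (\<Sum>i<J. (T $$ (j,i))\<^sup>2) * (\<Sum>i<J. (cmod (w i))\<^sup>2)"
    if j: "j < J" for j
  proof -
    have "cmod (v j) \<le> (\<Sum>i<J. \<bar>T $$ (j,i)\<bar> * cmod (w i))"
      unfolding v_eq[OF j] by (rule order_trans[OF norm_sum]) (simp add: norm_mult)
    then have "(cmod (v j))\<^sup>2 \<le> (\<Sum>i<J. \<bar>T $$ (j,i)\<bar> * cmod (w i))\<^sup>2"
      by (simp add: power_mono)
    also have "\<dots> \<le> (\<Sum>i<J. \<bar>T $$ (j,i)\<bar>\<^sup>2) * (\<Sum>i<J. (cmod (w i))\<^sup>2)"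
      by (rule Cauchy_Schwarz_ineq_sum)
    finally show ?thesis by simp
  qed
  have "(\<Sum>j<J. (cmod (v j))\<^sup>2) \<le> (\<Sum>j<J. (\<Sum>i<J. (T $$ (j,i))\<^sup>2) * (\<Sum>i<J. (cmod (w i))\<^sup>2))"
    by (rule sum_mono) (simp add: v_bound)
  then show ?thesis by (simp add: w_def sum_distrib_right)
qed

lemma sum_cmod_sq_pos_if_nonzero:
  assumes "v \<in> carrier_vec n" and "v \<noteq> 0\<^sub>v n"
  shows "0 < (\<Sum>j<n. (cmod (vec_index v j))\<^sup>2)"
proof -
  obtain j where j: "j < n" "vec_index v j \<noteq> 0"
    using assms by (metis eq_vecI carrier_vecD index_zero_vec)
  have "0 < (cmod (vec_index v j))\<^sup>2" using j by simp
  also have "\<dots> \<le> (\<Sum>j<n. (cmod (vec_index v j))\<^sup>2)"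
    by (rule member_le_sum[where f="\<lambda>k. (cmod (vec_index v k))\<^sup>2"]) (use j in auto)
  finally show ?thesis .
qed

lemma gram_eigenvalue_ge_if_left_inverse_rows:
  fixes A T :: "real mat"
  assumes A: "A \<in> carrier_mat L J" and T: "T \<in> carrier_mat J J"
    and ls: "\<forall>i<J. ls i < L"
    and TS: "T * mat J J (\<lambda>(i,j). A $$ (ls i, j)) = 1\<^sub>m J"
    and ev: "eigenvalue (map_mat complex_of_real (transpose_mat A * A)) z"
  shows "z = of_real (Re z) \<and> 1 / (real J * (\<Sum>j<J. \<Sum>i<J. (T $$ (j,i))\<^sup>2)) \<le> Re z"
proof -
  obtain v where v: "eigenvector (map_mat complex_of_real (transpose_mat A * A)) v z"
    using ev unfolding eigenvalue_def by blast
  define K where "K = (\<Sum>j<J. \<Sum>i<J. (T $$ (j,i))\<^sup>2)"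
  define w where "w k = (\<Sum>m<J. complex_of_real (A $$ (k,m)) * vec_index v m)" for k
  define N where "N = (\<Sum>j<J. (cmod (vec_index v j))\<^sup>2)"
  define W where "W = (\<Sum>k<L. (cmod (w k))\<^sup>2)"
  have K_nonneg: "0 \<le> K" unfolding K_def by (simp add: sum_nonneg)
  have z_N: "z * of_real N = of_real W"
    using gram_eigenvector_rayleigh[OF A v] unfolding N_def W_def w_def .
  have N_pos: "0 < N"
    unfolding N_def using v A by (intro sum_cmod_sq_pos_if_nonzero) (auto simp: eigenvector_def)
  have "(\<Sum>i<J. (cmod (\<Sum>m<J. of_real (mat J J (\<lambda>(i,j). A $$ (ls i, j)) $$ (i,m)) * vec_index v m))\<^sup>2)
      = (\<Sum>i<J. (cmod (w (ls i)))\<^sup>2)"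
    unfolding w_def by (auto intro!: sum.cong)
  then have "N \<le> K * (\<Sum>i<J. (cmod (w (ls i)))\<^sup>2)"
    using sum_cmod_sq_le_left_inverse[OF T _ TS, of "vec_index v"] by (simp add: N_def K_def)
  also have "\<dots> \<le> K * (real J * W)"
  proof (rule mult_left_mono[OF _ K_nonneg])
    have "(cmod (w (ls i)))\<^sup>2 \<le> W" if "i < J" for i
      unfolding W_def using ls that
      by (intro member_le_sum[where f="\<lambda>k. (cmod (w k))\<^sup>2"]) auto
    then show "(\<Sum>i<J. (cmod (w (ls i)))\<^sup>2) \<le> real J * W"
      using sum_mono[of "{..<J}" "\<lambda>i. (cmod (w (ls i)))\<^sup>2" "\<lambda>_. W"] by simp
  qed
  finally have N_le: "N \<le> real J * K * W" by (simp add: mult_ac)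
  then have "real J * K \<noteq> 0" using N_pos by (metis mult_zero_left not_le)
  moreover have "0 \<le> real J * K" using K_nonneg by simp
  ultimately have "0 < real J * K" by (metis order_le_neq_trans)
  then have "N / (real J * K) \<le> W" using N_le by (simp add: pos_divide_le_eq mult_ac)
  then have bound: "1 / (real J * K) \<le> W / N" using N_pos by (simp add: le_divide_eq)
  have z_eq: "z = of_real (W / N)" using z_N N_pos by (simp add: eq_divide_eq)
  then have Re_z: "Re z = W / N" by simp
  show ?thesis
  proof
    show "z = of_real (Re z)" using z_eq by simp
    show "1 / (real J * (\<Sum>j<J. \<Sum>i<J. (T $$ (j,i))\<^sup>2)) \<le> Re z"
      by (simp only: K_def[symmetric] Re_z bound)
  qed
qed

lemma proots_prod_list_linear: "proots (\<Prod>r\<leftarrow>rs. [:- r, 1:]) = mset (rs :: 'a :: idom list)"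
proof (induction rs)
  case (Cons r rs)
  have "(\<Prod>r\<leftarrow>rs. [:- r, 1:]) \<noteq> 0"
    by auto
  then have "proots (\<Prod>r\<leftarrow>r # rs. [:- r, 1:]) = proots [:- r, 1:] + proots (\<Prod>r\<leftarrow>rs. [:- r, 1:])"
    unfolding list.map prod_list.Cons by (intro proots_mult) auto
  then show ?case using Cons.IH by (metis minus_minus proots_linear_factor mset.simps(2) add_mset_add_single union_commute)
qed simp

lemma char_poly_eq_prod_real_eigenvalues:
  fixes M :: "real mat"
  assumes M: "M \<in> carrier_mat n n"
    and real: "\<And>z. eigenvalue (map_mat complex_of_real M) z \<Longrightarrow> z = of_real (Re z)"
  shows "\<exists>rs. char_poly M = (\<Prod>r\<leftarrow>rs. [:- r, 1:]) \<and> length rs = n \<and>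
    (\<forall>r \<in> set rs. eigenvalue (map_mat complex_of_real M) (of_real r))"
proof -
  interpret of_real_poly: map_poly_inj_comm_ring_hom "of_real :: real \<Rightarrow> complex" ..
  define Mc where "Mc = map_mat complex_of_real M"
  have Mc: "Mc \<in> carrier_mat n n" using M by (simp add: Mc_def)
  obtain as where as: "char_poly Mc = (\<Prod>a\<leftarrow>as. [:- a, 1:])" and length_as: "length as = n"
    using char_poly_factorized[OF Mc] by blast
  have as_eigenvalue: "eigenvalue Mc a" if "a \<in> set as" for a
  proof -
    have "poly (char_poly Mc) a = 0" unfolding as using that by (rule linear_poly_root)
    then show ?thesis using eigenvalue_root_char_poly[OF Mc] by blast
  qed
  then have as_real: "a = of_real (Re a)" if "a \<in> set as" for a
    using real that unfolding Mc_def by blast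
  define rs where "rs = map Re as"
  have "map_poly of_real (\<Prod>r\<leftarrow>rs. [:- r, 1:]) = (\<Prod>r\<leftarrow>rs. [:- complex_of_real r, 1:])"
    by (simp add: of_real_poly.hom_prod_list o_def)
  also have "\<dots> = (\<Prod>a\<leftarrow>as. [:- a, 1:])"
  proof -
    have "map (\<lambda>a. [:- complex_of_real (Re a), 1:]) as = map (\<lambda>a. [:- a, 1:]) as"
      by (rule map_cong[OF refl]) (metis as_real)
    then show ?thesis unfolding rs_def map_map o_def by (rule arg_cong)
  qed
  also have "\<dots> = map_poly of_real (char_poly M)"
    using as of_real_hom.char_poly_hom[OF M] unfolding Mc_def by metis
  finally have "char_poly M = (\<Prod>r\<leftarrow>rs. [:- r, 1:])" by simp
  moreover have "eigenvalue Mc (of_real r)" if "r \<in> set rs" for r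
    using that as_eigenvalue as_real unfolding rs_def by auto
  moreover have "length rs = n" using length_as by (simp add: rs_def)
  ultimately show ?thesis unfolding Mc_def by blast
qed

lemma sigma_sv_ge_if_gram_eigenvalues_ge:
  fixes A :: "real mat"
  assumes A: "A \<in> carrier_mat L J" and J: "0 < J"
    and ev: "\<And>z. eigenvalue (map_mat complex_of_real (transpose_mat A * A)) z
               \<Longrightarrow> z = of_real (Re z) \<and> b \<le> Re z"
  shows "sqrt b \<le> sigma_sv J A"
proof -
  have "transpose_mat A * A \<in> carrier_mat J J" using A by simp
  then obtain rs where char_poly: "char_poly (transpose_mat A * A) = (\<Prod>r\<leftarrow>rs. [:- r, 1:])"
    and length_rs: "length rs = J"
    and rs_ge: "\<forall>r \<in> set rs. b \<le> r"
    using char_poly_eq_prod_real_eigenvalues[of "transpose_mat A * A" J] ev by fastforce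
  define xs where "xs = sorted_list_of_multiset (mset rs)"
  have mset_xs: "mset xs = mset rs" by (simp add: xs_def)
  then have length_xs: "length xs = J" using length_rs by (metis size_mset)
  have "sigma_sv J A = sqrt (rev xs ! (J - 1))"
    unfolding sigma_sv_def singular_values_desc_def
    using char_poly length_xs J by (simp add: proots_prod_list_linear xs_def)
  moreover have "rev xs ! (J - 1) \<in> set rs"
    using length_xs J mset_xs by (metis diff_less less_one nth_mem set_rev length_rev set_mset_mset)
  ultimately show ?thesis using rs_ge by simp
qed

definition rat_interval :: "nat \<Rightarrow> real set" where
  "rat_interval k = (case from_nat k :: rat \<times> rat of (a, b) \<Rightarrow> {of_rat a .. of_rat b})"

lemma rat_interval_borel [measurable]: "rat_interval k \<in> sets borel"
  by (simp add: rat_interval_def split: prod.split)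

lemma rat_interval_surj:
  assumes "a \<in> \<rat>" "b \<in> \<rat>"
  shows "\<exists>k. rat_interval k = {a..b}"
proof -
  obtain qa qb where "a = of_rat qa" "b = of_rat qb" using assms Rats_cases by metis
  then show ?thesis by (intro exI[of _ "to_nat (qa, qb)"]) (simp add: rat_interval_def)
qed

lemma integrable_indicator_rat_interval_mult:
  fixes g :: "real \<Rightarrow> real"
  assumes "continuous_on UNIV g"
  shows "integrable lborel (\<lambda>x. indicator (rat_interval k) x * g x)"
proof -
  have "compact (rat_interval k)" by (simp add: rat_interval_def split: prod.split)
  moreover have "continuous_on (rat_interval k) g" using assms by (rule continuous_on_subset) simp
  ultimately show ?thesis using borel_integrable_compact[of "rat_interval k" g] by simp
qed

lemma rat_interval_integral_pos:
  fixes g :: "real \<Rightarrow> real"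
  assumes g: "continuous_on UNIV g" and x0: "0 < g x0"
  shows "\<exists>k. 0 < (\<integral>x. indicator (rat_interval k) x * g x \<partial>lborel)"
proof -
  have "isCont g x0" using g by (simp add: continuous_on_eq_continuous_at)
  then obtain d where d: "0 < d" and near: "\<And>x. dist x x0 < d \<Longrightarrow> dist (g x) (g x0) < g x0 / 2"
    using x0 unfolding continuous_at_eps_delta by (metis half_gt_zero)
  obtain a where a: "a \<in> \<rat>" "x0 - d < a" "a < x0" using Rats_dense_in_real[of "x0 - d" x0] d by auto
  obtain b where b: "b \<in> \<rat>" "x0 < b" "b < x0 + d" using Rats_dense_in_real[of x0 "x0 + d"] d by auto
  obtain k where k: "rat_interval k = {a..b}" using rat_interval_surj[OF a(1) b(1)] by blast
  have ge: "indicator {a..b} x * (g x0 / 2) \<le> indicator {a..b} x * g x" for x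
  proof (cases "x \<in> {a..b}")
    case True
    then have "dist (g x) (g x0) < g x0 / 2" using a b by (intro near) (auto simp: dist_real_def)
    then have "g x0 / 2 < g x" unfolding dist_real_def by arith
    then show ?thesis using True by simp
  qed simp
  have "0 < (b - a) * (g x0 / 2)" using a b x0 by simp
  also have "\<dots> = (\<integral>x. indicator {a..b} x * (g x0 / 2) \<partial>lborel)" using a b by simp
  also have "\<dots> \<le> (\<integral>x. indicator {a..b} x * g x \<partial>lborel)"
    using integrable_indicator_rat_interval_mult[OF g, of k] a b
    by (intro integral_mono[OF _ _ ge]) (auto simp: k)
  finally show ?thesis using k by metis
qed

lemma continuous_eq_0_if_rat_interval_integrals_eq_0:
  fixes g :: "real \<Rightarrow> real"
  assumes g: "continuous_on UNIV g"
    and integrals: "\<And>k. (\<integral>x. indicator (rat_interval k) x * g x \<partial>lborel) = 0"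
  shows "g x = 0"
proof (rule ccontr)
  assume "g x \<noteq> 0"
  then consider "0 < g x" | "0 < - g x" by linarith
  then show False
  proof cases
    case 1
    then show False using rat_interval_integral_pos[OF g] integrals by (metis less_irrefl)
  next
    case 2
    have "continuous_on UNIV (\<lambda>x. - g x)" using g by (intro continuous_intros)
    from rat_interval_integral_pos[OF this 2] integrals show False by simp
  qed
qed

lemma assumption_A4_continuous:
  assumes "assumption_A4 J f" and "j < J"
  shows "continuous_on UNIV (f j)"
  using assms unfolding assumption_A4_def holder_space_def bounded_cont_def
  by (metis funpow_0 le0)

lemma rat_interval_moments_independent:
  fixes f :: "nat \<Rightarrow> real \<Rightarrow> real"
  assumes A3: "assumption_A3 J f" and cont: "\<And>j. j < J \<Longrightarrow> continuous_on UNIV (f j)"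
    and c: "\<forall>l. (\<Sum>j<J. c j * (\<integral>x. indicator (rat_interval l) x * f j x \<partial>lborel)) = 0"
  shows "\<forall>j<J. c j = 0"
proof -
  define g where "g x = (\<Sum>j<J. c j * f j x)" for x
  have g: "continuous_on UNIV g"
    unfolding g_def by (intro continuous_intros) (use cont in auto)
  have "(\<integral>x. indicator (rat_interval l) x * g x \<partial>lborel)
      = (\<Sum>j<J. c j * (\<integral>x. indicator (rat_interval l) x * f j x \<partial>lborel))" for l
  proof -
    have "(\<integral>x. indicator (rat_interval l) x * g x \<partial>lborel)
        = (\<integral>x. (\<Sum>j<J. c j * (indicator (rat_interval l) x * f j x)) \<partial>lborel)"
      unfolding g_def by (simp add: sum_distrib_left mult_ac)
    also have "\<dots> = (\<Sum>j<J. c j * (\<integral>x. indicator (rat_interval l) x * f j x \<partial>lborel))"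
      using integrable_indicator_rat_interval_mult[OF cont] by simp
    finally show ?thesis .
  qed
  then have "g x = 0" for x
    using continuous_eq_0_if_rat_interval_integrals_eq_0[OF g] c by simp
  then show ?thesis using A3 unfolding assumption_A3_def g_def by blast
qed

lemma sigma_sv_row_truncations_bounded_below:
  fixes H :: "nat \<Rightarrow> nat \<Rightarrow> real"
  assumes J: "0 < J" and indep: "\<And>c. \<forall>l. (\<Sum>j<J. c j * H l j) = 0 \<Longrightarrow> \<forall>j<J. c j = 0"
  shows "\<exists>C>0. \<exists>Lbar. \<forall>L0 \<ge> Lbar. C \<le> sigma_sv J (mat L0 J (\<lambda>(l,j). H l j))"
proof -
  obtain ls where "det (mat J J (\<lambda>(i,j). H (ls i) j)) \<noteq> 0"
    using exists_nonsingular_row_selection[OF indep] by blast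
  then obtain T where T: "T \<in> carrier_mat J J" and TS: "T * mat J J (\<lambda>(i,j). H (ls i) j) = 1\<^sub>m J"
    using exists_left_inverse_if_det_nonzero[OF mat_carrier] by blast
  define C where "C = sqrt (1 / (real J * (\<Sum>j<J. \<Sum>i<J. (T $$ (j,i))\<^sup>2)))"
  define Lbar where "Lbar = Suc (Max (ls ` {..<J}))"
  have "C \<le> sigma_sv J (mat L0 J (\<lambda>(l,j). H l j))" if "Lbar \<le> L0" for L0
  proof -
    have "ls i \<le> Max (ls ` {..<J})" if "i < J" for i
      using that by (intro Max_ge) auto
    then have ls: "\<forall>i<J. ls i < L0"
      using that unfolding Lbar_def by (meson le_less_trans lessI le_trans not_le)
    then have "mat J J (\<lambda>(i,j). mat L0 J (\<lambda>(l,j). H l j) $$ (ls i, j)) = mat J J (\<lambda>(i,j). H (ls i) j)"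
      by (intro eq_matI) auto
    then show ?thesis unfolding C_def using J TS
      by (intro sigma_sv_ge_if_gram_eigenvalues_ge gram_eigenvalue_ge_if_left_inverse_rows[OF _ T ls]) auto
  qed
  moreover have "0 < C"
    using sum_sq_entries_pos_if_left_inverse[OF T _ TS J] J by (simp add: C_def)
  ultimately show ?thesis by blast
qed

theorem lemma23:
  shows "\<exists>h :: nat \<Rightarrow> real \<Rightarrow> real.
     (\<forall>l. h l \<in> borel_measurable borel) \<and>
     (\<exists>B. \<forall>l x. \<bar>h l x\<bar> \<le> B) \<and>
     (\<forall>(J::nat) (Q::real mat) (p::nat \<Rightarrow> real) (f::nat \<Rightarrow> real \<Rightarrow> real).
        J \<ge> 2 \<and> lebesgue_densities J f \<and> assumption_A2' J Q p \<and>
        assumption_A3 J f \<and> assumption_A4 J f \<longrightarrow>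
        (\<exists>C>0. \<exists>Lbar::nat. \<forall>L0 \<ge> Lbar. sigma_sv J (O_mat f h J L0) \<ge> C))"
proof -
  define h :: "nat \<Rightarrow> real \<Rightarrow> real" where "h l = indicator (rat_interval (l - 1))" for l
  have O_mat_h: "O_mat f h J L0 = mat L0 J (\<lambda>(l,j). \<integral>x. indicator (rat_interval l) x * f j x \<partial>lborel)"
    for f J L0
    by (simp add: O_mat_def cond_exp_emission_def h_def)
  show ?thesis
  proof (intro exI[of _ h] conjI allI impI)
    show "h l \<in> borel_measurable borel" for l
      unfolding h_def by measurable
    show "\<exists>B. \<forall>l x. \<bar>h l x\<bar> \<le> B"
      by (intro exI[of _ 1]) (simp add: h_def indicator_def)
    fix J Q p and f :: "nat \<Rightarrow> real \<Rightarrow> real"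
    assume "2 \<le> J \<and> lebesgue_densities J f \<and> assumption_A2' J Q p \<and>
      assumption_A3 J f \<and> assumption_A4 J f"
    then have J: "0 < J" and A3: "assumption_A3 J f" and A4: "assumption_A4 J f" by auto
    show "\<exists>C>0. \<exists>Lbar. \<forall>L0 \<ge> Lbar. C \<le> sigma_sv J (O_mat f h J L0)"
      unfolding O_mat_h
      using sigma_sv_row_truncations_bounded_below[OF J
          rat_interval_moments_independent[OF A3 assumption_A4_continuous[OF A4]]] .
  qed
qed

end
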